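(* Let $V$ be a finite ground set partitioned into groups $V_1,\dots,V_m$, let $\alpha$ be a nonnegative integer and $c$ a positive integer, and let $f:2^V\to\mathbb{R}_{\ge0}$ be submodular (not necessarily monotone). Let $OPT$ be an optimal solution of Problem P.2: maximize $f(S)$ over $S\subseteq V$ subject to $|S\cap V_i|-|S\cap V_j|\le\alpha$ for all $i,j\in[m]$ and $|S|\le c$. Assume $\min_{i\in[m]}|OPT\cap V_i|>1$, and let $z=\min_{i\in[m]}\lfloor|OPT\cap V_i|/2\rfloor$. Then the output $A^{\mathsf{final}}$ of the two-phase algorithm described in the context satisfies $$\mathbb{E}[f(A^{\mathsf{final}})]\ge\frac{1/e-o(1)}{8}\cdot f(OPT).$$
   Context: Problem P.2.2 (depending on $z$): maximize $f(S)$ over $S\subseteq V$ subject to $|S\cap V_i|\le z+\alpha$ for all $i$ and $\sum_{i\in[m]}\max\{z,|S\cap V_i|\}\le c$. Its feasible sets form a matroid. Algorithm: Phase 1: compute a random feasible solution $A^{P22}$ of P.2.2 using the randomized algorithm of Feldman, Naor and Schwartz (2011) for (non-monotone) submodular maximization under a matroid constraint, which guarantees $\mathbb{E}[f(A^{P22})]\ge(1/e-o(1))\,f(S^{P22})$ where $S^{P22}$ is an optimal solution of P.2.2. Phase 2: let $L=\{i\in[m]:|A^{P22}\cap V_i|<z\}$; for each $i\in L$ pick arbitrary disjoint $X_i,Y_i\subseteq V_i\setminus A^{P22}$ with $|X_i|=|Y_i|=z-|A^{P22}\cap V_i|$; let $A^1=A^{P22}\cup\bigcup_{i\in L}X_i$,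 $A^2=A^{P22}\cup\bigcup_{i\in L}Y_i$, and output $A^{\mathsf{final}}$, the one of $A^1,A^2$ with larger $f$-value. The expectation is over the randomness of Phase 1. *)

theory Defs
  imports "HOL-Probability.Probability"
begin

definition is_partition :: "'a set \<Rightarrow> nat \<Rightarrow> (nat \<Rightarrow> 'a set) \<Rightarrow> bool" where
  "is_partition V m Vg \<longleftrightarrow>
     (\<Union>i\<in>{1..m}. Vg i) = V \<and>
     (\<forall>i\<in>{1..m}. \<forall>j\<in>{1..m}. i \<noteq> j \<longrightarrow> Vg i \<inter> Vg j = {})"

definition submodular_on :: "'a set \<Rightarrow> ('a set \<Rightarrow> real) \<Rightarrow> bool" where
  "submodular_on V f \<longleftrightarrow>
     (\<forall>A B. A \<subseteq> V \<longrightarrow> B \<subseteq> V \<longrightarrow> f (A \<union> B) + f (A \<inter> B) \<le> f A + f B)"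

definition feasible_P2 ::
  "'a set \<Rightarrow> nat \<Rightarrow> (nat \<Rightarrow> 'a set) \<Rightarrow> nat \<Rightarrow> nat \<Rightarrow> 'a set \<Rightarrow> bool" where
  "feasible_P2 V m Vg \<alpha> c S \<longleftrightarrow>
     S \<subseteq> V \<and>
     (\<forall>i\<in>{1..m}. \<forall>j\<in>{1..m}.
        int (card (S \<inter> Vg i)) - int (card (S \<inter> Vg j)) \<le> int \<alpha>) \<and>
     card S \<le> c"

definition feasible_P22 ::
  "'a set \<Rightarrow> nat \<Rightarrow> (nat \<Rightarrow> 'a set) \<Rightarrow> nat \<Rightarrow> nat \<Rightarrow> nat \<Rightarrow> 'a set \<Rightarrow> bool" where
  "feasible_P22 V m Vg \<alpha> c z S \<longleftrightarrow>
     S \<subseteq> V \<and>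
     (\<forall>i\<in>{1..m}. card (S \<inter> Vg i) \<le> z + \<alpha>) \<and>
     (\<Sum>i\<in>{1..m}. max z (card (S \<inter> Vg i))) \<le> c"

definition is_optimal :: "('a set \<Rightarrow> bool) \<Rightarrow> ('a set \<Rightarrow> real) \<Rightarrow> 'a set \<Rightarrow> bool" where
  "is_optimal feas f S \<longleftrightarrow> feas S \<and> (\<forall>T. feas T \<longrightarrow> f T \<le> f S)"

definition deficient :: "nat \<Rightarrow> (nat \<Rightarrow> 'a set) \<Rightarrow> nat \<Rightarrow> 'a set \<Rightarrow> nat set" where
  "deficient m Vg z A = {i\<in>{1..m}. card (A \<inter> Vg i) < z}"

text \<open>X, Y : the (arbitrary) choices made in Phase 2, as functions of the Phase-1 outcome A
  and the group index i. This predicate states the requirements on them.\<close>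
definition valid_phase2_choice ::
  "nat \<Rightarrow> (nat \<Rightarrow> 'a set) \<Rightarrow> nat \<Rightarrow> 'a set \<Rightarrow> ('a set \<Rightarrow> nat \<Rightarrow> 'a set) \<Rightarrow>
   ('a set \<Rightarrow> nat \<Rightarrow> 'a set) \<Rightarrow> bool" where
  "valid_phase2_choice m Vg z A X Y \<longleftrightarrow>
     (\<forall>i\<in>deficient m Vg z A.
        X A i \<subseteq> Vg i - A \<and> Y A i \<subseteq> Vg i - A \<and> X A i \<inter> Y A i = {} \<and>
        card (X A i) = z - card (A \<inter> Vg i) \<and> card (Y A i) = z - card (A \<inter> Vg i))"

definition phase2_output ::
  "('a set \<Rightarrow> real) \<Rightarrow> nat \<Rightarrow> (nat \<Rightarrow> 'a set) \<Rightarrow> nat \<Rightarrow>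
   ('a set \<Rightarrow> nat \<Rightarrow> 'a set) \<Rightarrow> ('a set \<Rightarrow> nat \<Rightarrow> 'a set) \<Rightarrow> 'a set \<Rightarrow> 'a set" where
  "phase2_output f m Vg z X Y A =
     (let A1 = A \<union> (\<Union>i\<in>deficient m Vg z A. X A i);
          A2 = A \<union> (\<Union>i\<in>deficient m Vg z A. Y A i)
      in if f A2 \<le> f A1 then A1 else A2)"

end

theory Submission
  imports Defs
begin

text \<open>Since every group of OPT has between 2z and 2z + 1 + \<alpha> elements, OPT splits into
  three pieces with at most z + \<alpha> elements per group; each piece is feasible for P.2.2, so
  subadditivity of the nonnegative submodular f gives f(OPT) \<le> 3 f(S22). In Phase 2 the two
  completions meet exactly in A, so submodularity and nonnegativity give
  f(A) \<le> f(A1) + f(A2) \<le> 2 f(Afinal). Together,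
  E f(Afinal) \<ge> (1/e - \<epsilon>) f(S22) / 2 \<ge> (1/e - \<epsilon>) f(OPT) / 6.\<close>

lemma submodular_on_inter_le_add:
  assumes "submodular_on V f" "\<forall>S. S \<subseteq> V \<longrightarrow> 0 \<le> f S" "A \<subseteq> V" "B \<subseteq> V"
  shows "f (A \<inter> B) \<le> f A + f B"
proof -
  have "f (A \<union> B) + f (A \<inter> B) \<le> f A + f B"
    using assms(1,3,4) unfolding submodular_on_def by blast
  moreover have "0 \<le> f (A \<union> B)"
    using assms(2-4) by simp
  ultimately show ?thesis by linarith
qed

lemma submodular_on_union_le_add:
  assumes "submodular_on V f" "\<forall>S. S \<subseteq> V \<longrightarrow> 0 \<le> f S" "A \<subseteq> V" "B \<subseteq> V"
  shows "f (A \<union> B) \<le> f A + f B"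
proof -
  have "f (A \<union> B) + f (A \<inter> B) \<le> f A + f B"
    using assms(1,3,4) unfolding submodular_on_def by blast
  moreover have "0 \<le> f (A \<inter> B)"
    using assms(2,3) by (simp add: le_infI1)
  ultimately show ?thesis by linarith
qed

lemma is_partition_disjoint_family_on:
  "is_partition V m Vg \<Longrightarrow> disjoint_family_on Vg {1..m}"
  unfolding is_partition_def disjoint_family_on_def by blast

lemma card_eq_sum_card_groups:
  assumes "is_partition V m Vg" "finite S" "S \<subseteq> V"
  shows "card S = (\<Sum>i\<in>{1..m}. card (S \<inter> Vg i))"
proof -
  have "S = (\<Union>i\<in>{1..m}. S \<inter> Vg i)"
    using assms(1,3) unfolding is_partition_def by blast
  moreover have "disjoint_family_on (\<lambda>i. S \<inter> Vg i) {1..m}"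
    using is_partition_disjoint_family_on[OF assms(1)] unfolding disjoint_family_on_def by blast
  ultimately show ?thesis
    using card_UN_disjoint'[of "\<lambda>i. S \<inter> Vg i" "{1..m}"] assms(2) by simp
qed

lemma obtain_subset_capped_in_groups:
  assumes "disjoint_family_on Vg I"
  obtains S where "S \<subseteq> T" "\<forall>i\<in>I. card (S \<inter> Vg i) = min b (card (T \<inter> Vg i))"
proof -
  have "\<exists>s. s \<subseteq> T \<inter> Vg i \<and> card s = min b (card (T \<inter> Vg i))" for i
    by (meson min.cobounded2 obtain_subset_with_card_n)
  then obtain g where g: "\<And>i. g i \<subseteq> T \<inter> Vg i \<and> card (g i) = min b (card (T \<inter> Vg i))"
    by metis
  show thesis
  proof (rule that)
    show "(\<Union>j\<in>I. g j) \<subseteq> T"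
      using g by blast
    have "(\<Union>j\<in>I. g j) \<inter> Vg i = g i" if "i \<in> I" for i
    proof -
      have "g j \<inter> Vg i = {}" if "j \<in> I" "j \<noteq> i" for j
        using g[of j] assms \<open>i \<in> I\<close> that unfolding disjoint_family_on_def by blast
      then show ?thesis
        using g[of i] that by blast
    qed
    then show "\<forall>i\<in>I. card ((\<Union>j\<in>I. g j) \<inter> Vg i) = min b (card (T \<inter> Vg i))"
      using g by simp
  qed
qed

lemma submodular_on_le_mult_if_groupwise_le:
  fixes f :: "'a set \<Rightarrow> real"
  assumes submod: "submodular_on V f" and nonneg: "\<forall>S. S \<subseteq> V \<longrightarrow> 0 \<le> f S"
    and disj: "disjoint_family_on Vg I"
    and "0 < k" "finite T" "T \<subseteq> V" "\<forall>i\<in>I. card (T \<inter> Vg i) \<le> k * b"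
    and "\<And>S. S \<subseteq> T \<Longrightarrow> \<forall>i\<in>I. card (S \<inter> Vg i) \<le> b \<Longrightarrow> f S \<le> M"
  shows "f T \<le> k * M"
  using assms(4-)
proof (induction k arbitrary: T rule: nat_induct_non_zero)
  case 1
  then show ?case by simp
next
  case (Suc k)
  obtain S where S: "S \<subseteq> T" "\<forall>i\<in>I. card (S \<inter> Vg i) = min b (card (T \<inter> Vg i))"
    using obtain_subset_capped_in_groups[OF disj] .
  have "f S \<le> M"
    using Suc.prems(4) S by simp
  moreover have "f (T - S) \<le> k * M"
  proof (rule Suc.IH)
    show "\<forall>i\<in>I. card ((T - S) \<inter> Vg i) \<le> k * b"
    proof
      fix i assume "i \<in> I"
      have "S \<inter> Vg i \<subseteq> T \<inter> Vg i" "finite (S \<inter> Vg i)"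
        using S(1) \<open>finite T\<close> finite_subset by blast+
      moreover have "(T - S) \<inter> Vg i = T \<inter> Vg i - S \<inter> Vg i" by blast
      ultimately have "card ((T - S) \<inter> Vg i) = card (T \<inter> Vg i) - card (S \<inter> Vg i)"
        by (simp add: card_Diff_subset)
      then show "card ((T - S) \<inter> Vg i) \<le> k * b"
        using S(2) Suc.prems(3) \<open>i \<in> I\<close> by auto
    qed
  qed (use Suc.prems in \<open>auto intro: Suc.prems(4)\<close>)
  moreover have "f T \<le> f S + f (T - S)"
  proof -
    have "S \<subseteq> V" "T - S \<subseteq> V" "S \<union> (T - S) = T"
      using S(1) Suc.prems(2) by blast+
    then show ?thesis
      using submodular_on_union_le_add[OF submod nonneg] by metis
  qed
  ultimately show ?case by (simp add: algebra_simps)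
qed

lemma min_half_balanced_bounds:
  fixes K :: "nat \<Rightarrow> nat"
  assumes "finite I" "\<forall>i\<in>I. 1 < K i"
    and balanced: "\<forall>i\<in>I. \<forall>j\<in>I. int (K i) - int (K j) \<le> int \<alpha>"
    and z: "z = Min ((\<lambda>i. K i div 2) ` I)" and "i \<in> I"
  shows "z \<le> K i" "K i \<le> 3 * (z + \<alpha>)"
proof -
  have fin: "finite ((\<lambda>i. K i div 2) ` I)" and "(\<lambda>i. K i div 2) ` I \<noteq> {}"
    using assms(1,5) by auto
  then have "z \<in> (\<lambda>i. K i div 2) ` I"
    using Min_in z by simp
  then obtain j where "j \<in> I" "z = K j div 2"
    by blast
  have "z \<le> K i div 2"
    using Min_le[OF fin] z \<open>i \<in> I\<close> by simp
  then show "z \<le> K i"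
    by simp
  have "1 < K j"
    using assms(2) \<open>j \<in> I\<close> by blast
  then have "K j \<le> 2 * z + 1" "1 \<le> z"
    using \<open>z = K j div 2\<close> by presburger+
  moreover have "int (K i) - int (K j) \<le> int \<alpha>"
    using balanced \<open>j \<in> I\<close> \<open>i \<in> I\<close> by blast
  ultimately show "K i \<le> 3 * (z + \<alpha>)"
    by presburger
qed

lemma feasible_P22_if_subset_feasible_P2:
  assumes part: "is_partition V m Vg" and "finite V"
    and T: "feasible_P2 V m Vg \<alpha> c T" "\<forall>i\<in>{1..m}. z \<le> card (T \<inter> Vg i)"
    and S: "S \<subseteq> T" "\<forall>i\<in>{1..m}. card (S \<inter> Vg i) \<le> z + \<alpha>"
  shows "feasible_P22 V m Vg \<alpha> c z S"
proof -
  have TV: "T \<subseteq> V" "card T \<le> c" and "finite T"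
    using T(1) \<open>finite V\<close> finite_subset unfolding feasible_P2_def by auto
  have "max z (card (S \<inter> Vg i)) \<le> card (T \<inter> Vg i)" if "i \<in> {1..m}" for i
  proof -
    have "card (S \<inter> Vg i) \<le> card (T \<inter> Vg i)"
      using S(1) \<open>finite T\<close> by (intro card_mono) auto
    then show ?thesis
      using T(2) that by simp
  qed
  then have "(\<Sum>i\<in>{1..m}. max z (card (S \<inter> Vg i))) \<le> (\<Sum>i\<in>{1..m}. card (T \<inter> Vg i))"
    by (rule sum_mono)
  also have "\<dots> = card T"
    using card_eq_sum_card_groups[OF part \<open>finite T\<close> TV(1)] by simp
  finally have "(\<Sum>i\<in>{1..m}. max z (card (S \<inter> Vg i))) \<le> card T" .
  then show ?thesis
    using S TV unfolding feasible_P22_def by auto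
qed

lemma optimum_P2_le_three_optimum_P22:
  fixes f :: "'a set \<Rightarrow> real"
  assumes "finite V" and part: "is_partition V m Vg"
    and submod: "submodular_on V f" and nonneg: "\<forall>S. S \<subseteq> V \<longrightarrow> 0 \<le> f S"
    and OPT: "feasible_P2 V m Vg \<alpha> c OPT" "\<forall>i\<in>{1..m}. 1 < card (OPT \<inter> Vg i)"
    and z: "z = Min ((\<lambda>i. card (OPT \<inter> Vg i) div 2) ` {1..m})"
    and S22: "is_optimal (feasible_P22 V m Vg \<alpha> c z) f S22"
  shows "f OPT \<le> 3 * f S22"
proof -
  have OPTV: "OPT \<subseteq> V" and balanced:
    "\<forall>i\<in>{1..m}. \<forall>j\<in>{1..m}. int (card (OPT \<inter> Vg i)) - int (card (OPT \<inter> Vg j)) \<le> int \<alpha>"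
    using OPT(1) unfolding feasible_P2_def by auto
  note bounds = min_half_balanced_bounds[OF finite_atLeastAtMost OPT(2) balanced z]
  have "f S \<le> f S22" if "S \<subseteq> OPT" "\<forall>i\<in>{1..m}. card (S \<inter> Vg i) \<le> z + \<alpha>" for S
    using feasible_P22_if_subset_feasible_P2[OF part \<open>finite V\<close> OPT(1) _ that] bounds(1) S22
    unfolding is_optimal_def by blast
  moreover have "finite OPT"
    using OPTV \<open>finite V\<close> finite_subset by blast
  ultimately show ?thesis
    using submodular_on_le_mult_if_groupwise_le[OF submod nonneg
        is_partition_disjoint_family_on[OF part], of 3 OPT "z + \<alpha>" "f S22"] bounds(2) OPTV
    by auto
qed

lemma phase2_completions_inter:
  assumes "disjoint_family_on Vg {1..m}" "valid_phase2_choice m Vg z A X Y"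
  shows "(A \<union> (\<Union>i\<in>deficient m Vg z A. X A i)) \<inter> (A \<union> (\<Union>i\<in>deficient m Vg z A. Y A i)) = A"
proof -
  have "X A i \<inter> Y A j = {}" if "i \<in> deficient m Vg z A" "j \<in> deficient m Vg z A" for i j
  proof (cases "i = j")
    case False
    then have "Vg i \<inter> Vg j = {}"
      using assms(1) that unfolding disjoint_family_on_def deficient_def by blast
    then show ?thesis
      using assms(2) that unfolding valid_phase2_choice_def by blast
  qed (use assms(2) that in \<open>simp add: valid_phase2_choice_def\<close>)
  then show ?thesis by blast
qed

lemma phase2_output_ge_half:
  fixes f :: "'a set \<Rightarrow> real"
  assumes part: "is_partition V m Vg"
    and submod: "submodular_on V f" and nonneg: "\<forall>S. S \<subseteq> V \<longrightarrow> 0 \<le> f S"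
    and "A \<subseteq> V" and choice: "valid_phase2_choice m Vg z A X Y"
  shows "f A \<le> 2 * f (phase2_output f m Vg z X Y A)"
proof -
  define A1 where "A1 = A \<union> (\<Union>i\<in>deficient m Vg z A. X A i)"
  define A2 where "A2 = A \<union> (\<Union>i\<in>deficient m Vg z A. Y A i)"
  have "X A i \<subseteq> Vg i" "Y A i \<subseteq> Vg i" if "i \<in> deficient m Vg z A" for i
    using choice that unfolding valid_phase2_choice_def by blast+
  moreover have "Vg i \<subseteq> V" if "i \<in> deficient m Vg z A" for i
    using part that unfolding is_partition_def deficient_def by blast
  ultimately have "A1 \<subseteq> V" "A2 \<subseteq> V"
    using \<open>A \<subseteq> V\<close> unfolding A1_def A2_def by blast+
  moreover have "A1 \<inter> A2 = A"
    using phase2_completions_inter[OF is_partition_disjoint_family_on[OF part] choice]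
    unfolding A1_def A2_def .
  ultimately have "f A \<le> f A1 + f A2"
    using submodular_on_inter_le_add[OF submod nonneg] by metis
  moreover have "f (phase2_output f m Vg z X Y A) = max (f A1) (f A2)"
    unfolding phase2_output_def A1_def A2_def Let_def by simp
  ultimately show ?thesis by linarith
qed

lemma expectation_phase2_output_ge_half:
  fixes f :: "'a set \<Rightarrow> real"
  assumes "finite V" and part: "is_partition V m Vg"
    and submod: "submodular_on V f" and nonneg: "\<forall>S. S \<subseteq> V \<longrightarrow> 0 \<le> f S"
    and supp: "set_pmf P \<subseteq> Pow V"
    and choice: "\<forall>A\<in>set_pmf P. valid_phase2_choice m Vg z A X Y"
  shows "measure_pmf.expectation P f / 2
           \<le> measure_pmf.expectation P (\<lambda>A. f (phase2_output f m Vg z X Y A))"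
    and "0 \<le> measure_pmf.expectation P (\<lambda>A. f (phase2_output f m Vg z X Y A))"
proof -
  let ?out = "\<lambda>A. f (phase2_output f m Vg z X Y A)"
  have half: "f A / 2 \<le> ?out A" "0 \<le> ?out A" if "A \<in> set_pmf P" for A
  proof -
    have "A \<subseteq> V"
      using supp that by blast
    then have "f A \<le> 2 * ?out A" "0 \<le> f A"
      using phase2_output_ge_half[OF part submod nonneg] choice that nonneg by blast+
    then show "f A / 2 \<le> ?out A" "0 \<le> ?out A"
      by linarith+
  qed
  have "finite (set_pmf P)"
    using supp \<open>finite V\<close> by (simp add: finite_subset)
  then show "measure_pmf.expectation P f / 2 \<le> measure_pmf.expectation P ?out"
    using integral_mono_AE'[of P ?out "\<lambda>A. f A / 2"] half
    by (simp add: integrable_measure_pmf_finite AE_measure_pmf_iff)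
  show "0 \<le> measure_pmf.expectation P ?out"
    using half by (intro integral_nonneg_AE) (simp add: AE_measure_pmf_iff)
qed

theorem theorem4:
  fixes V :: "'a set" and m :: nat and Vg :: "nat \<Rightarrow> 'a set"
    and \<alpha> c :: nat and f :: "'a set \<Rightarrow> real"
    and OPT :: "'a set" and z :: nat
    and \<epsilon> :: real
    and S22 :: "'a set"
    and P1 :: "'a set pmf"
    and X Y :: "'a set \<Rightarrow> nat \<Rightarrow> 'a set"
  assumes finV: "finite V"
    and m_pos: "0 < m"
    and part: "is_partition V m Vg"
    and c_pos: "0 < c"
    and f_nonneg: "\<forall>S. S \<subseteq> V \<longrightarrow> 0 \<le> f S"
    and f_submod: "submodular_on V f"
    and OPT_opt: "is_optimal (feasible_P2 V m Vg \<alpha> c) f OPT"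
    and min_gt1: "\<forall>i\<in>{1..m}. 1 < card (OPT \<inter> Vg i)"
    and z_def: "z = Min ((\<lambda>i. card (OPT \<inter> Vg i) div 2) ` {1..m})"
    and S22_opt: "is_optimal (feasible_P22 V m Vg \<alpha> c z) f S22"
    and P1_feas: "\<forall>A\<in>set_pmf P1. feasible_P22 V m Vg \<alpha> c z A"
    and P1_approx: "measure_pmf.expectation P1 f \<ge> (1 / exp 1 - \<epsilon>) * f S22"
    and choice: "\<forall>A\<in>set_pmf P1. valid_phase2_choice m Vg z A X Y"
  shows "measure_pmf.expectation P1 (\<lambda>A. f (phase2_output f m Vg z X Y A))
           \<ge> (1 / exp 1 - \<epsilon>) / 8 * f OPT"
proof -
  have OPT: "feasible_P2 V m Vg \<alpha> c OPT"
    using OPT_opt unfolding is_optimal_def by blast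
  then have "0 \<le> f OPT"
    using f_nonneg unfolding feasible_P2_def by blast
  have "f OPT \<le> 3 * f S22"
    by (rule optimum_P2_le_three_optimum_P22[OF finV part f_submod f_nonneg OPT min_gt1
          z_def S22_opt])
  have "set_pmf P1 \<subseteq> Pow V"
    using P1_feas unfolding feasible_P22_def by blast
  note E_out = expectation_phase2_output_ge_half[OF finV part f_submod f_nonneg this choice]
  show ?thesis
  proof (cases "0 \<le> 1 / exp 1 - \<epsilon>")
    case True
    then have "(1 / exp 1 - \<epsilon>) / 8 * f OPT \<le> (1 / exp 1 - \<epsilon>) / 8 * (4 * f S22)"
      using \<open>f OPT \<le> 3 * f S22\<close> \<open>0 \<le> f OPT\<close> by (intro mult_left_mono) auto
    also have "\<dots> = (1 / exp 1 - \<epsilon>) * f S22 / 2"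
      by simp
    also have "\<dots> \<le> measure_pmf.expectation P1 f / 2"
      using P1_approx by simp
    finally show ?thesis
      using E_out(1) by linarith
  next
    case False
    then have "(1 / exp 1 - \<epsilon>) / 8 * f OPT \<le> 0"
      using \<open>0 \<le> f OPT\<close> by (simp add: mult_nonpos_nonneg)
    then show ?thesis
      using E_out(2) by linarith
  qed
qed

end
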